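(* Let $\pi$ be a projective unitary representation of a countable group $G$ on a Hilbert space $H$ such that the commutant $\pi(G)'$ is a finite von Neumann algebra. Assume that $\bigcup_{i=1}^k\{\pi(g)\xi_i\}_{g\in G}$ is a frame for $H$. If $A\in\pi(G)'$ and $\eta_1,\dots,\eta_k\in H$ are Bessel vectors for $\pi$ with $\xi_i=A\eta_i$ for $i=1,\dots,k$, then $A$ is invertible and $\bigcup_{i=1}^k\{\pi(g)\eta_i\}_{g\in G}$ is also a frame for $H$.
   Context: A projective unitary representation of $G$ on $H$ is a map $g\mapsto\pi(g)$ into unitaries with $\pi(g)\pi(h)=\mu(g,h)\pi(gh)$, $\mu:G\times G\to\mathbb{T}$. $\eta$ is a Bessel vector for $\pi$ if $\{\pi(g)\eta\}_{g\in G}$ is a Bessel sequence. *)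

theory Defs
  imports "HOL-Analysis.Analysis" "HOL-Algebra.Group"
begin

text \<open>The distribution has no complex Hilbert spaces, so we introduce them as a type
class: a real normed vector space with a complex scalar multiplication (extending the
real one) and a complex inner product, linear in the first argument, conjugate symmetric,
inducing the norm.\<close>

class complex_inner = real_normed_vector +
  fixes scaleC :: "complex \<Rightarrow> 'a \<Rightarrow> 'a" (infixr \<open>*\<^sub>C\<close> 75)
  fixes cinner :: "'a \<Rightarrow> 'a \<Rightarrow> complex"
  assumes scaleC_add_right: "c *\<^sub>C (x + y) = c *\<^sub>C x + c *\<^sub>C y"
  and scaleC_add_left: "(c + d) *\<^sub>C x = c *\<^sub>C x + d *\<^sub>C x"
  and scaleC_scaleC: "c *\<^sub>C (d *\<^sub>C x) = (c * d) *\<^sub>C x"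
  and scaleC_one: "1 *\<^sub>C x = x"
  and scaleR_scaleC: "scaleR r x = complex_of_real r *\<^sub>C x"
  and cinner_add_left: "cinner (x + y) z = cinner x z + cinner y z"
  and cinner_scaleC_left: "cinner (c *\<^sub>C x) y = c * cinner x y"
  and cinner_commute: "cinner y x = cnj (cinner x y)"
  and cinner_self_norm: "cinner x x = complex_of_real ((norm x)\<^sup>2)"

class chilbert_space = complex_inner + complete_space

definition clinear :: "('a::complex_inner \<Rightarrow> 'b::complex_inner) \<Rightarrow> bool" where
  "clinear f \<longleftrightarrow> (\<forall>x y. f (x + y) = f x + f y) \<and> (\<forall>c x. f (c *\<^sub>C x) = c *\<^sub>C f x)"

definition bounded_clinear :: "('a::complex_inner \<Rightarrow> 'b::complex_inner) \<Rightarrow> bool" where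
  "bounded_clinear f \<longleftrightarrow> clinear f \<and> (\<exists>K. \<forall>x. norm (f x) \<le> norm x * K)"

text \<open>Hilbert space adjoint (exists and is unique for bounded operators by Riesz).\<close>
definition cadjoint :: "('a::complex_inner \<Rightarrow> 'a) \<Rightarrow> ('a \<Rightarrow> 'a)" where
  "cadjoint T = (SOME S. \<forall>x y. cinner (T x) y = cinner x (S y))"

definition unitary_op :: "('a::complex_inner \<Rightarrow> 'a) \<Rightarrow> bool" where
  "unitary_op U \<longleftrightarrow> bounded_clinear U \<and> cadjoint U \<circ> U = id \<and> U \<circ> cadjoint U = id"

definition invertible_op :: "('a::complex_inner \<Rightarrow> 'a) \<Rightarrow> bool" where
  "invertible_op A \<longleftrightarrow> (\<exists>B. bounded_clinear B \<and> A \<circ> B = id \<and> B \<circ> A = id)"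

definition commutant :: "('a::complex_inner \<Rightarrow> 'a) set \<Rightarrow> ('a \<Rightarrow> 'a) set" where
  "commutant S = {T. bounded_clinear T \<and> (\<forall>s\<in>S. T \<circ> s = s \<circ> T)}"

text \<open>Von Neumann algebra: a self-adjoint set of bounded operators equal to its
double commutant. Finite: every isometry in it is unitary (the identity is a finite
projection).\<close>
definition von_neumann_algebra :: "('a::complex_inner \<Rightarrow> 'a) set \<Rightarrow> bool" where
  "von_neumann_algebra M \<longleftrightarrow> M = commutant (commutant M) \<and> (\<forall>T\<in>M. cadjoint T \<in> M)"

definition finite_von_neumann_algebra :: "('a::complex_inner \<Rightarrow> 'a) set \<Rightarrow> bool" where
  "finite_von_neumann_algebra M \<longleftrightarrow> von_neumann_algebra M \<and>
     (\<forall>V\<in>M. cadjoint V \<circ> V = id \<longrightarrow> V \<circ> cadjoint V = id)"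

definition proj_unitary_rep ::
  "('g, 'b) monoid_scheme \<Rightarrow> ('g \<Rightarrow> 'a::complex_inner \<Rightarrow> 'a) \<Rightarrow> ('g \<Rightarrow> 'g \<Rightarrow> complex) \<Rightarrow> bool" where
  "proj_unitary_rep G \<pi> \<mu> \<longleftrightarrow>
     (\<forall>g\<in>carrier G. unitary_op (\<pi> g)) \<and>
     (\<forall>g\<in>carrier G. \<forall>h\<in>carrier G. cmod (\<mu> g h) = 1 \<and>
        (\<forall>x. \<pi> g (\<pi> h x) = \<mu> g h *\<^sub>C \<pi> (g \<otimes>\<^bsub>G\<^esub> h) x))"

definition bessel_seq :: "'j set \<Rightarrow> ('j \<Rightarrow> 'a::complex_inner) \<Rightarrow> bool" where
  "bessel_seq J f \<longleftrightarrow> (\<exists>b. \<forall>x.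
     (\<lambda>j. (cmod (cinner x (f j)))\<^sup>2) summable_on J \<and>
     (\<Sum>\<^sub>\<infinity>j\<in>J. (cmod (cinner x (f j)))\<^sup>2) \<le> b * (norm x)\<^sup>2)"

definition frame :: "'j set \<Rightarrow> ('j \<Rightarrow> 'a::complex_inner) \<Rightarrow> bool" where
  "frame J f \<longleftrightarrow> (\<exists>a b. 0 < a \<and> 0 < b \<and> (\<forall>x.
     (\<lambda>j. (cmod (cinner x (f j)))\<^sup>2) summable_on J \<and>
     a * (norm x)\<^sup>2 \<le> (\<Sum>\<^sub>\<infinity>j\<in>J. (cmod (cinner x (f j)))\<^sup>2) \<and>
     (\<Sum>\<^sub>\<infinity>j\<in>J. (cmod (cinner x (f j)))\<^sup>2) \<le> b * (norm x)\<^sup>2))"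

definition bessel_vector ::
  "('g, 'b) monoid_scheme \<Rightarrow> ('g \<Rightarrow> 'a::complex_inner \<Rightarrow> 'a) \<Rightarrow> 'a \<Rightarrow> bool" where
  "bessel_vector G \<pi> \<eta> \<longleftrightarrow> bessel_seq (carrier G) (\<lambda>g. \<pi> g \<eta>)"

end

theory Submission
  imports Defs "HOL-Computational_Algebra.Formal_Power_Series"
begin

text \<open>By the commutation of A with \<pi>, the frame sum of the vectors \<pi>(g) \<xi>_i = A \<pi>(g) \<eta>_i
at x equals the Bessel sum of the \<pi>(g) \<eta>_i at A* x, so the frame bounds make A* bounded
below: AA* \<ge> c > 0. For small t > 0 the binomial series of (1 + Y) powr (-1/2) in
Y = t AA* - 1 converges and yields S = (AA*) powr (-1/2) in the von Neumann algebra. Then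
V = A* S is an isometry in it, hence unitary by finiteness. The identity VV* = 1 says that
A* S^2 is a two-sided inverse of A and that A* is onto, and writing x = A* y transports the
lower frame bound from the \<xi>_i to the \<eta>_i.\<close>

section \<open>Complex inner product spaces\<close>

lemma cinner_zero_left[simp]: "cinner (0::'a::complex_inner) y = 0"
  using cinner_add_left[of 0 0 y] by simp

lemma cinner_minus_left: "cinner (- x) y = - cinner (x::'a::complex_inner) y"
  using cinner_add_left[of "-x" x y] by (simp add: eq_neg_iff_add_eq_0)

lemma cinner_diff_left: "cinner (x - z) y = cinner x y - cinner (z::'a::complex_inner) y"
  by (simp only: diff_conv_add_uminus cinner_add_left cinner_minus_left)

lemma cnj_cinner: "cnj (cinner x y) = cinner y (x::'a::complex_inner)"
  by (rule cinner_commute[where x=x and y=y, symmetric])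

lemma cinner_add_right: "cinner x (y + z) = cinner x y + cinner x (z::'a::complex_inner)"
  by (metis cinner_add_left cnj_cinner complex_cnj_add)

lemma cinner_scaleC_right: "cinner x (c *\<^sub>C y) = cnj c * cinner x (y::'a::complex_inner)"
  by (metis cinner_scaleC_left cnj_cinner complex_cnj_mult)

lemma cinner_zero_right[simp]: "cinner x (0::'a::complex_inner) = 0"
  by (metis cinner_zero_left cnj_cinner complex_cnj_zero)

lemma cinner_minus_right: "cinner x (- y) = - cinner x (y::'a::complex_inner)"
  by (metis cinner_minus_left cnj_cinner complex_cnj_minus)

lemma cinner_diff_right: "cinner x (y - z) = cinner x y - cinner x (z::'a::complex_inner)"
  by (simp only: diff_conv_add_uminus cinner_add_right cinner_minus_right)

lemma cinner_scaleR_left: "cinner (r *\<^sub>R x) y = of_real r * cinner (x::'a::complex_inner) y"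
  by (simp add: scaleR_scaleC cinner_scaleC_left)

lemma cinner_scaleR_right: "cinner x (r *\<^sub>R y) = of_real r * cinner x (y::'a::complex_inner)"
  by (simp add: scaleR_scaleC cinner_scaleC_right)

lemma Re_cinner_self: "Re (cinner x x) = (norm (x::'a::complex_inner))\<^sup>2"
  by (simp add: cinner_self_norm)

lemma cinner_self_eq_0[simp]: "cinner x x = 0 \<longleftrightarrow> (x::'a::complex_inner) = 0"
  by (simp add: cinner_self_norm)

lemma norm_scaleC: "norm (c *\<^sub>C x) = cmod c * norm (x::'a::complex_inner)"
proof -
  have "complex_of_real ((norm (c *\<^sub>C x))\<^sup>2) = cinner (c *\<^sub>C x) (c *\<^sub>C x)"
    by (rule cinner_self_norm[symmetric])
  also have "\<dots> = c * cnj c * cinner x x"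
    by (simp add: cinner_scaleC_left cinner_scaleC_right)
  also have "\<dots> = complex_of_real ((cmod c)\<^sup>2) * complex_of_real ((norm x)\<^sup>2)"
    by (simp only: cinner_self_norm complex_norm_square)
  also have "\<dots> = complex_of_real ((cmod c)\<^sup>2 * (norm x)\<^sup>2)"
    by (rule of_real_mult[symmetric])
  finally have "(norm (c *\<^sub>C x))\<^sup>2 = ((cmod c) * norm x)\<^sup>2"
    unfolding of_real_eq_iff power_mult_distrib .
  then show ?thesis
    by (simp add: power2_eq_iff_nonneg)
qed

lemma cinner_eqI: "(\<And>x. cinner x a = cinner x b) \<Longrightarrow> a = (b::'a::complex_inner)"
  using cinner_self_eq_0[of "a - b"] by (simp add: cinner_diff_right)

lemma norm_add_sq: "(norm (x + y))\<^sup>2 = (norm x)\<^sup>2 + (norm y)\<^sup>2 + 2 * Re (cinner x (y::'a::complex_inner))"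
proof -
  have "(norm (x + y))\<^sup>2 = Re (cinner (x+y) (x+y))" by (simp add: Re_cinner_self)
  also have "\<dots> = Re (cinner x x) + Re (cinner y y) + Re (cinner x y) + Re (cinner y x)"
    by (simp add: cinner_add_left cinner_add_right)
  also have "Re (cinner y x) = Re (cinner x y)"
    by (subst cinner_commute) simp
  finally show ?thesis by (simp add: Re_cinner_self)
qed

lemma norm_diff_sq: "(norm (x - y))\<^sup>2 = (norm x)\<^sup>2 + (norm y)\<^sup>2 - 2 * Re (cinner x (y::'a::complex_inner))"
  using norm_add_sq[of x "-y"] by (simp add: cinner_minus_right)

lemma norm_diff_projection_sq:
  fixes x y :: "'a::complex_inner"
  assumes "y \<noteq> 0"
  shows "(norm (x - (cinner x y / of_real ((norm y)\<^sup>2)) *\<^sub>C y))\<^sup>2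
           = (norm x)\<^sup>2 - (cmod (cinner x y))\<^sup>2 / (norm y)\<^sup>2"
proof -
  define n where "n = (norm y)\<^sup>2"
  have n: "n > 0" using assms by (simp add: n_def)
  define c where "c = cinner x y"
  have "(norm (x - (c / of_real n) *\<^sub>C y))\<^sup>2 = (norm x)\<^sup>2 + (norm ((c / of_real n) *\<^sub>C y))\<^sup>2
        - 2 * Re (cinner x ((c / of_real n) *\<^sub>C y))"
    by (rule norm_diff_sq)
  also have "(norm ((c / of_real n) *\<^sub>C y))\<^sup>2 = (cmod c)\<^sup>2 / n"
  proof -
    have "norm ((c / of_real n) *\<^sub>C y) = cmod c / n * norm y"
      using n by (simp add: norm_scaleC norm_divide)
    then have "(norm ((c / of_real n) *\<^sub>C y))\<^sup>2 = (cmod c)\<^sup>2 / n\<^sup>2 * n"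
      by (simp add: power_mult_distrib power_divide n_def)
    also have "\<dots> = (cmod c)\<^sup>2 / n"
      using n by (simp add: power2_eq_square)
    finally show ?thesis .
  qed
  also have "Re (cinner x ((c / of_real n) *\<^sub>C y)) = (cmod c)\<^sup>2 / n"
  proof -
    have "cinner x ((c / of_real n) *\<^sub>C y) = cnj c * c / of_real n"
      by (simp add: cinner_scaleC_right c_def)
    also have "cnj c * c = of_real ((cmod c)\<^sup>2)"
      using complex_norm_square[of c] by (simp add: mult.commute)
    finally show ?thesis by (simp add: Re_divide_of_real)
  qed
  finally show ?thesis by (simp add: c_def n_def)
qed

lemma cinner_Cauchy_Schwarz: "cmod (cinner x y) \<le> norm x * norm (y::'a::complex_inner)"
proof (cases "y = 0")
  case True then show ?thesis by simp
next
  case False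
  have "0 \<le> (norm (x - (cinner x y / of_real ((norm y)\<^sup>2)) *\<^sub>C y))\<^sup>2"
    by (rule zero_le_power2)
  then have "0 \<le> (norm x)\<^sup>2 - (cmod (cinner x y))\<^sup>2 / (norm y)\<^sup>2"
    by (simp only: norm_diff_projection_sq[OF False])
  then have "(cmod (cinner x y))\<^sup>2 / (norm y)\<^sup>2 \<le> (norm x)\<^sup>2"
    by linarith
  moreover have "(norm y)\<^sup>2 > 0" using False by simp
  ultimately have "(cmod (cinner x y))\<^sup>2 \<le> (norm x)\<^sup>2 * (norm y)\<^sup>2"
    by (simp add: pos_divide_le_eq)
  then have h: "(cmod (cinner x y))\<^sup>2 \<le> (norm x * norm y)\<^sup>2"
    by (simp add: power_mult_distrib)
  have "0 \<le> norm x * norm y" by simp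
  with h show ?thesis by (rule power2_le_imp_le)
qed

lemma parallelogram_law:
  "(norm (a - b))\<^sup>2 + (norm (a + b))\<^sup>2 = 2 * (norm a)\<^sup>2 + 2 * (norm (b::'a::complex_inner))\<^sup>2"
  using norm_add_sq[of a b] norm_diff_sq[of a b] by simp

lemma bounded_linear_cinner_left: "bounded_linear (\<lambda>v. cinner v (y::'a::complex_inner))"
proof (rule bounded_linear_intro[where K="norm y"])
  show "cinner (v + w) y = cinner v y + cinner w y" for v w by (rule cinner_add_left)
  show "cinner (r *\<^sub>R v) y = r *\<^sub>R cinner v y" for r v
    by (simp add: cinner_scaleR_left scaleR_conv_of_real)
  show "norm (cinner v y) \<le> norm v * norm y" for v by (simp add: cinner_Cauchy_Schwarz)
qed

lemma bounded_linear_cinner_right: "bounded_linear (\<lambda>v. cinner (y::'a::complex_inner) v)"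
proof (rule bounded_linear_intro[where K="norm y"])
  show "cinner y (v + w) = cinner y v + cinner y w" for v w by (rule cinner_add_right)
  show "cinner y (r *\<^sub>R v) = r *\<^sub>R cinner y v" for r v
    by (simp add: cinner_scaleR_right scaleR_conv_of_real)
  show "norm (cinner y v) \<le> norm v * norm y" for v using cinner_Cauchy_Schwarz[of y v] by (simp add: mult.commute)
qed

section \<open>Orthogonal projection, Riesz representation and adjoints\<close>

lemma minimizing_sequence_Cauchy:
  fixes s :: "nat \<Rightarrow> 'a::complex_inner"
  assumes s: "\<And>k. s k \<in> N"
    and midpoint: "\<And>x y. x \<in> N \<Longrightarrow> y \<in> N \<Longrightarrow> (1/2) *\<^sub>R (x + y) \<in> N"
    and lower: "\<And>n. n \<in> N \<Longrightarrow> d \<le> (norm (u - n))\<^sup>2"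
    and close: "\<And>k. (norm (u - s k))\<^sup>2 < d + inverse (real (Suc k))"
  shows "Cauchy s"
proof (rule metric_CauchyI)
  have diam: "(norm (s k - s m))\<^sup>2 \<le> 2 * inverse (real (Suc m)) + 2 * inverse (real (Suc k))"
    for k m
  proof -
    have "(u - s m) - (u - s k) = s k - s m" "(u - s m) + (u - s k) = 2 *\<^sub>R (u - (1/2) *\<^sub>R (s m + s k))"
      by (simp_all add: algebra_simps scaleR_2)
    then have "(norm (s k - s m))\<^sup>2 + 4 * (norm (u - (1/2) *\<^sub>R (s m + s k)))\<^sup>2
        = 2 * (norm (u - s m))\<^sup>2 + 2 * (norm (u - s k))\<^sup>2"
      using parallelogram_law[of "u - s m" "u - s k"] by (simp add: power_mult_distrib)
    moreover have "d \<le> (norm (u - (1/2) *\<^sub>R (s m + s k)))\<^sup>2"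
      by (intro lower midpoint s)
    ultimately show ?thesis using close[of m] close[of k] by linarith
  qed
  fix e :: real assume e: "0 < e"
  obtain M :: nat where M: "4 / e\<^sup>2 < real M" using reals_Archimedean2 by blast
  have "dist (s m) (s n) < e" if "m \<ge> M" "n \<ge> M" for m n
  proof -
    have "inverse (real (Suc m)) \<le> inverse (real (Suc M))"
      "inverse (real (Suc n)) \<le> inverse (real (Suc M))"
      using that by (simp_all add: le_imp_inverse_le)
    moreover have "4 * inverse (real (Suc M)) < e\<^sup>2"
    proof -
      have "4 / e\<^sup>2 < real (Suc M)" using M by simp
      then show ?thesis using e by (simp add: field_simps)
    qed
    ultimately have "(norm (s m - s n))\<^sup>2 < e\<^sup>2" using diam[of m n] by linarith
    then show ?thesis using e by (simp add: dist_norm power2_less_imp_less)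
  qed
  then show "\<exists>M. \<forall>m\<ge>M. \<forall>n\<ge>M. dist (s m) (s n) < e" by blast
qed

lemma closest_point_exists:
  fixes N :: "'a::chilbert_space set"
  assumes closed: "closed N" and "N \<noteq> {}"
    and midpoint: "\<And>x y. x \<in> N \<Longrightarrow> y \<in> N \<Longrightarrow> (1/2) *\<^sub>R (x + y) \<in> N"
  obtains p where "p \<in> N" "\<And>n. n \<in> N \<Longrightarrow> norm (u - p) \<le> norm (u - n)"
proof -
  define d where "d = Inf ((\<lambda>n. (norm (u - n))\<^sup>2) ` N)"
  have lower: "d \<le> (norm (u - n))\<^sup>2" if "n \<in> N" for n
    unfolding d_def using that by (intro cInf_lower bdd_belowI[of _ 0]) auto
  have "\<exists>n\<in>N. (norm (u - n))\<^sup>2 < d + inverse (real (Suc k))" for k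
    using cInf_lessD[of "(\<lambda>n. (norm (u - n))\<^sup>2) ` N" "d + inverse (real (Suc k))"] \<open>N \<noteq> {}\<close>
    by (auto simp: d_def)
  then obtain s where s: "\<And>k. s k \<in> N"
    and close: "\<And>k. (norm (u - s k))\<^sup>2 < d + inverse (real (Suc k))"
    by metis
  have "Cauchy s"
    using s midpoint lower close by (rule minimizing_sequence_Cauchy)
  then obtain p where lim: "s \<longlonglongrightarrow> p" using Cauchy_convergent_iff convergent_def by blast
  have "p \<in> N" using closed_sequentially[OF closed] s lim by blast
  have "(\<lambda>k. (norm (u - s k))\<^sup>2) \<longlonglongrightarrow> (norm (u - p))\<^sup>2"
    by (intro tendsto_intros lim)
  moreover have "(\<lambda>k. (norm (u - s k))\<^sup>2) \<longlonglongrightarrow> d"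
  proof (rule tendsto_sandwich[of "\<lambda>_. d" _ _ "\<lambda>k. d + inverse (real (Suc k))"])
    show "\<forall>\<^sub>F k in sequentially. d \<le> (norm (u - s k))\<^sup>2"
      using lower s by (simp add: always_eventually)
    show "\<forall>\<^sub>F k in sequentially. (norm (u - s k))\<^sup>2 \<le> d + inverse (real (Suc k))"
      using close less_imp_le by (blast intro: always_eventually)
    show "(\<lambda>k. d + inverse (real (Suc k))) \<longlonglongrightarrow> d"
      using tendsto_add[OF tendsto_const[of d] LIMSEQ_inverse_real_of_nat] by simp
  qed simp
  ultimately have "(norm (u - p))\<^sup>2 = d" by (rule LIMSEQ_unique)
  then have "norm (u - p) \<le> norm (u - n)" if "n \<in> N" for n
    using lower[OF that] by (simp add: power2_le_imp_le)
  with \<open>p \<in> N\<close> show ?thesis by (rule that)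
qed

lemma orthogonal_projection_exists:
  fixes N :: "'a::chilbert_space set"
  assumes "closed N" and zero: "0 \<in> N" and add: "\<And>x y. x \<in> N \<Longrightarrow> y \<in> N \<Longrightarrow> x + y \<in> N"
    and scale: "\<And>c x. x \<in> N \<Longrightarrow> c *\<^sub>C x \<in> N"
  obtains p where "p \<in> N" "\<And>n. n \<in> N \<Longrightarrow> cinner (u - p) n = 0"
proof -
  have "(1/2) *\<^sub>R (x + y) \<in> N" if "x \<in> N" "y \<in> N" for x y
    using scale[OF add[OF that], of "complex_of_real (1/2)"] by (simp add: scaleR_scaleC)
  then obtain p where p: "p \<in> N" and min: "\<And>n. n \<in> N \<Longrightarrow> norm (u - p) \<le> norm (u - n)"
    using closest_point_exists[OF \<open>closed N\<close>] zero by blast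
  have "cinner (u - p) n = 0" if n: "n \<in> N" for n
  proof (cases "n = 0")
    case False
    define c where "c = cinner (u - p) n"
    have "p + (c / of_real ((norm n)\<^sup>2)) *\<^sub>C n \<in> N" by (intro add p scale n)
    from min[OF this] have "(norm (u - p))\<^sup>2 \<le> (norm (u - p - (c / of_real ((norm n)\<^sup>2)) *\<^sub>C n))\<^sup>2"
      by (simp add: diff_diff_eq power_mono)
    also have "\<dots> = (norm (u - p))\<^sup>2 - (cmod c)\<^sup>2 / (norm n)\<^sup>2"
      unfolding c_def by (rule norm_diff_projection_sq[OF False])
    finally have "(cmod c)\<^sup>2 / (norm n)\<^sup>2 \<le> 0" by simp
    with False have "(cmod c)\<^sup>2 \<le> 0" by (simp add: divide_le_0_iff)
    then show ?thesis by (simp add: c_def)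
  qed simp
  with p show ?thesis by (rule that)
qed

definition bounded_cfunctional :: "('a::complex_inner \<Rightarrow> complex) \<Rightarrow> bool" where
  "bounded_cfunctional f \<longleftrightarrow> (\<forall>x y. f (x + y) = f x + f y) \<and> (\<forall>c x. f (c *\<^sub>C x) = c * f x) \<and>
     (\<exists>K. \<forall>x. cmod (f x) \<le> norm x * K)"

lemma bounded_cfunctional_bounded_linear: "bounded_cfunctional f \<Longrightarrow> bounded_linear f"
  unfolding bounded_cfunctional_def
proof (elim conjE exE)
  fix K assume add: "\<forall>x y. f (x + y) = f x + f y" and scale: "\<forall>c x. f (c *\<^sub>C x) = c * f x"
    and bound: "\<forall>x. cmod (f x) \<le> norm x * K"
  show "bounded_linear f"
  proof (rule bounded_linear_intro[of f K])
    show "f (r *\<^sub>R x) = r *\<^sub>R f x" for r x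
      using scale[rule_format, of "complex_of_real r" x] by (simp add: scaleR_scaleC scaleR_conv_of_real)
  qed (use add bound in auto)
qed

lemma riesz_representation:
  fixes f :: "'a::chilbert_space \<Rightarrow> complex"
  assumes "bounded_cfunctional f"
  shows "\<exists>z. \<forall>x. f x = cinner x z"
proof (cases "\<forall>x. f x = 0")
  case True then show ?thesis by (intro exI[of _ 0]) simp
next
  case False
  then obtain u where u: "f u \<noteq> 0" by blast
  have bl: "bounded_linear f" using assms by (rule bounded_cfunctional_bounded_linear)
  have scale: "\<And>c x. f (c *\<^sub>C x) = c * f x" using assms by (simp add: bounded_cfunctional_def)
  have "closed (f -` {0})"
    by (intro continuous_closed_vimage) (simp_all add: bounded_linear.isCont[OF bl] continuous_at_imp_continuous_at_within)
  then obtain p where "f p = 0" and orth: "\<And>n. f n = 0 \<Longrightarrow> cinner (u - p) n = 0"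
    using orthogonal_projection_exists[of "f -` {0}" u] bl scale by (auto simp: linear_simps)
  define w where "w = u - p"
  have fw: "f w = f u" using \<open>f p = 0\<close> bl by (simp add: w_def linear_simps)
  have "f x = cinner x ((cnj (f w) / of_real ((norm w)\<^sup>2)) *\<^sub>C w)" for x
  proof -
    have "f (x - (f x / f w) *\<^sub>C w) = 0" using u fw bl by (simp add: linear_simps scale)
    then have "cinner w (x - (f x / f w) *\<^sub>C w) = 0" using orth by (simp add: w_def)
    then have "cinner (x - (f x / f w) *\<^sub>C w) w = 0" by (metis cnj_cinner complex_cnj_zero)
    then have "cinner x w = (f x / f w) * of_real ((norm w)\<^sup>2)"
      by (simp add: cinner_diff_left cinner_scaleC_left cinner_self_norm)
    moreover have "w \<noteq> 0" using u fw bl by (auto simp: linear_simps)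
    ultimately show ?thesis using u fw by (simp add: cinner_scaleC_right field_simps)
  qed
  then show ?thesis by blast
qed

lemma bounded_clinear_add: "bounded_clinear f \<Longrightarrow> f (x + y) = f x + f y"
  by (simp add: bounded_clinear_def clinear_def)

lemma bounded_clinear_scaleC: "bounded_clinear f \<Longrightarrow> f (c *\<^sub>C x) = c *\<^sub>C f x"
  by (simp add: bounded_clinear_def clinear_def)

lemma bounded_clinear_bounded_linear: "bounded_clinear f \<Longrightarrow> bounded_linear f"
  unfolding bounded_clinear_def clinear_def
proof (elim conjE exE)
  fix K assume add: "\<forall>x y. f (x + y) = f x + f y" and scale: "\<forall>c x. f (c *\<^sub>C x) = c *\<^sub>C f x"
    and bound: "\<forall>x. norm (f x) \<le> norm x * K"
  show "bounded_linear f"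
  proof (rule bounded_linear_intro[of f K])
    show "f (r *\<^sub>R x) = r *\<^sub>R f x" for r x
      using scale by (simp add: scaleR_scaleC)
  qed (use add bound in auto)
qed

lemma cadjoint_exists:
  fixes T :: "'a::chilbert_space \<Rightarrow> 'a"
  assumes "bounded_clinear T"
  shows "\<exists>S. \<forall>x y. cinner (T x) y = cinner x (S y)"
proof -
  obtain K where K: "\<And>x. norm (T x) \<le> norm x * K"
    using assms by (auto simp: bounded_clinear_def)
  have "\<exists>z. \<forall>x. cinner (T x) y = cinner x z" for y
  proof (rule riesz_representation)
    show "bounded_cfunctional (\<lambda>x. cinner (T x) y)"
      unfolding bounded_cfunctional_def
    proof (intro conjI allI exI)
      show "cinner (T (x + x')) y = cinner (T x) y + cinner (T x') y" for x x'
        using assms by (simp add: bounded_clinear_add cinner_add_left)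
      show "cinner (T (c *\<^sub>C x)) y = c * cinner (T x) y" for c x
        using assms by (simp add: bounded_clinear_scaleC cinner_scaleC_left)
      show "cmod (cinner (T x) y) \<le> norm x * (K * norm y)" for x
        using cinner_Cauchy_Schwarz[of "T x" y] mult_right_mono[OF K[of x], of "norm y"]
        by (simp add: mult.assoc)
    qed
  qed
  then show ?thesis by metis
qed

lemma cinner_cadjoint:
  fixes T :: "'a::chilbert_space \<Rightarrow> 'a"
  assumes "bounded_clinear T"
  shows "cinner (T x) y = cinner x (cadjoint T y)"
  using someI_ex[OF cadjoint_exists[OF assms]] unfolding cadjoint_def by blast

lemma cinner_cadjoint_left:
  fixes T :: "'a::chilbert_space \<Rightarrow> 'a"
  assumes "bounded_clinear T"
  shows "cinner (cadjoint T x) y = cinner x (T y)"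
  by (metis assms cinner_cadjoint cnj_cinner)

lemma cadjoint_eqI:
  fixes T :: "'a::chilbert_space \<Rightarrow> 'a"
  assumes "bounded_clinear T" and "\<And>x y. cinner (T x) y = cinner x (S y)"
  shows "cadjoint T = S"
proof
  show "cadjoint T y = S y" for y
    by (rule cinner_eqI) (metis assms cinner_cadjoint)
qed

lemma norm_cadjoint_le:
  fixes T :: "'a::chilbert_space \<Rightarrow> 'a"
  assumes T: "bounded_clinear T" and "0 \<le> K" and bound: "\<And>x. norm (T x) \<le> norm x * K"
  shows "norm (cadjoint T y) \<le> norm y * K"
proof (cases "cadjoint T y = 0")
  case False
  have "(norm (cadjoint T y))\<^sup>2 = Re (cinner (T (cadjoint T y)) y)"
    by (simp add: cinner_cadjoint[OF T] Re_cinner_self)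
  also have "\<dots> \<le> norm (T (cadjoint T y)) * norm y"
    using complex_Re_le_cmod cinner_Cauchy_Schwarz order_trans by blast
  also have "\<dots> \<le> norm (cadjoint T y) * K * norm y"
    using bound by (simp add: mult_right_mono)
  finally have "norm (cadjoint T y) * norm (cadjoint T y) \<le> norm (cadjoint T y) * (norm y * K)"
    by (simp add: power2_eq_square mult_ac)
  with False show ?thesis by simp
qed (simp add: \<open>0 \<le> K\<close>)

lemma bounded_clinear_scaleC_right: "bounded_clinear (\<lambda>x::'a::complex_inner. c *\<^sub>C x)"
  unfolding bounded_clinear_def clinear_def
  by (auto simp: scaleC_add_right scaleC_scaleC mult.commute norm_scaleC intro!: exI[of _ "cmod c"])

lemma scaleC_Re_Im: "c *\<^sub>C x = Re c *\<^sub>R x + Im c *\<^sub>R (\<i> *\<^sub>C (x::'a::complex_inner))"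
proof -
  have "c *\<^sub>C x = (complex_of_real (Re c) + \<i> * complex_of_real (Im c)) *\<^sub>C x"
    using complex_eq[of c] by simp
  also have "\<dots> = complex_of_real (Re c) *\<^sub>C x + (complex_of_real (Im c) * \<i>) *\<^sub>C x"
    by (simp add: scaleC_add_left mult.commute)
  also have "\<dots> = Re c *\<^sub>R x + Im c *\<^sub>R (\<i> *\<^sub>C x)"
    by (simp add: scaleR_scaleC scaleC_scaleC)
  finally show ?thesis .
qed

lemma bounded_clinearI_ii:
  fixes f :: "'a::complex_inner \<Rightarrow> 'a"
  assumes bl: "bounded_linear f" and J: "\<And>x. f (\<i> *\<^sub>C x) = \<i> *\<^sub>C f x"
  shows "bounded_clinear f"
  unfolding bounded_clinear_def clinear_def
proof (intro conjI allI)
  show "f (x + y) = f x + f y" for x y using bl by (simp add: linear_simps)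
  show "f (c *\<^sub>C x) = c *\<^sub>C f x" for c x
  proof -
    have "f (c *\<^sub>C x) = f (Re c *\<^sub>R x + Im c *\<^sub>R (\<i> *\<^sub>C x))" by (simp only: scaleC_Re_Im[of c x])
    also have "\<dots> = Re c *\<^sub>R f x + Im c *\<^sub>R f (\<i> *\<^sub>C x)" using bl by (simp add: linear_simps)
    also have "\<dots> = c *\<^sub>C f x" by (simp only: J scaleC_Re_Im[of c "f x", symmetric])
    finally show ?thesis .
  qed
  show "\<exists>K. \<forall>x. norm (f x) \<le> norm x * K"
    using bounded_linear.bounded[OF bl] by blast
qed

section \<open>A Banach algebra of bounded real-linear operators\<close>

text \<open>The operators are only real-linear, as in \<open>blinfun\<close>; complex linearity is recovered
from commutation with multiplication by \<i> (\<open>bounded_clinearI_ii\<close>).\<close>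

typedef (overloaded) 'a bop = "UNIV :: ('a::real_normed_vector \<Rightarrow>\<^sub>L 'a) set" by simp

setup_lifting type_definition_bop

instantiation bop :: (real_normed_vector) real_normed_algebra
begin
lift_definition zero_bop :: "'a bop" is 0 .
lift_definition plus_bop :: "'a bop \<Rightarrow> 'a bop \<Rightarrow> 'a bop" is "(+)" .
lift_definition minus_bop :: "'a bop \<Rightarrow> 'a bop \<Rightarrow> 'a bop" is "(-)" .
lift_definition uminus_bop :: "'a bop \<Rightarrow> 'a bop" is uminus .
lift_definition scaleR_bop :: "real \<Rightarrow> 'a bop \<Rightarrow> 'a bop" is scaleR .
lift_definition times_bop :: "'a bop \<Rightarrow> 'a bop \<Rightarrow> 'a bop" is blinfun_compose .
lift_definition norm_bop :: "'a bop \<Rightarrow> real" is norm .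
definition sgn_bop :: "'a bop \<Rightarrow> 'a bop" where "sgn_bop x = scaleR (inverse (norm x)) x"
definition dist_bop :: "'a bop \<Rightarrow> 'a bop \<Rightarrow> real" where "dist_bop a b = norm (a - b)"
definition uniformity_bop :: "('a bop \<times> 'a bop) filter" where
  "uniformity_bop = (INF e\<in>{0 <..}. principal {(x, y). dist x y < e})"
definition open_bop :: "'a bop set \<Rightarrow> bool" where
  "open_bop S = (\<forall>x\<in>S. \<forall>\<^sub>F (x', y) in uniformity. x' = x \<longrightarrow> y \<in> S)"
instance
  apply standard
  unfolding dist_bop_def open_bop_def sgn_bop_def uniformity_bop_def
  apply (rule refl | (transfer, auto intro!: blinfun_eqI simp: blinfun.bilinear_simps
        norm_triangle_ineq norm_blinfun_compose algebra_simps))+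
  done
end

lemma dist_bop_Rep: "dist a b = dist (Rep_bop a) (Rep_bop b)"
  unfolding dist_bop_def dist_norm by transfer simp

instance bop :: (banach) banach
proof
  fix X :: "nat \<Rightarrow> 'a bop"
  assume "Cauchy X"
  then have "Cauchy (\<lambda>n. Rep_bop (X n))"
    unfolding Cauchy_def dist_bop_Rep .
  then obtain L where L: "(\<lambda>n. Rep_bop (X n)) \<longlonglongrightarrow> L"
    using Cauchy_convergent_iff convergent_def by blast
  have "X \<longlonglongrightarrow> Abs_bop L"
    using L unfolding lim_sequentially dist_bop_Rep by (simp add: Abs_bop_inverse)
  then show "convergent X" by (auto simp: convergent_def)
qed

instantiation bop :: (real_normed_vector) monoid_mult
begin
lift_definition one_bop :: "'a bop" is id_blinfun .
instance
  by standard (transfer, auto intro!: blinfun_eqI)+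
end

lift_definition bop_apply :: "'a::real_normed_vector bop \<Rightarrow> 'a \<Rightarrow> 'a" is blinfun_apply .

lemma bop_apply_times[simp]: "bop_apply (S * T) x = bop_apply S (bop_apply T x)" by transfer simp
lemma bop_apply_one[simp]: "bop_apply 1 x = x" by transfer simp
lemma bop_apply_plus[simp]: "bop_apply (S + T) x = bop_apply S x + bop_apply T x" by transfer (simp add: blinfun.bilinear_simps)
lemma bop_apply_minus[simp]: "bop_apply (S - T) x = bop_apply S x - bop_apply T x" by transfer (simp add: blinfun.bilinear_simps)
lemma bop_apply_scaleR[simp]: "bop_apply (r *\<^sub>R S) x = r *\<^sub>R bop_apply S x" by transfer (simp add: blinfun.bilinear_simps)
lemma norm_bop_apply: "norm (bop_apply S x) \<le> norm S * norm x" by transfer (rule norm_blinfun)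
lemma bop_apply_bounded_linear: "bounded_linear (bop_apply S)" by transfer (rule blinfun.bounded_linear_right)
lemma bop_eqI: "(\<And>x. bop_apply S x = bop_apply T x) \<Longrightarrow> S = T"
  by transfer (rule blinfun_eqI)
lemma norm_bop_bound: "0 \<le> b \<Longrightarrow> (\<And>x. norm (bop_apply S x) \<le> b * norm x) \<Longrightarrow> norm S \<le> b"
  by transfer (rule norm_blinfun_bound)
lemma norm_one_bop_le: "norm (1::'a::real_normed_vector bop) \<le> 1"
  by transfer (rule norm_blinfun_id_le)

lemma bop_apply_left_bounded_linear: "bounded_linear (\<lambda>S. bop_apply S x)"
  by (rule bounded_linear_intro[where K="norm x"]) (simp_all add: norm_bop_apply)

definition Bop :: "('a::real_normed_vector \<Rightarrow> 'a) \<Rightarrow> 'a bop" where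
  "Bop f = Abs_bop (Blinfun f)"

lemma bop_apply_Bop: "bounded_linear f \<Longrightarrow> bop_apply (Bop f) = f"
  unfolding Bop_def by (simp add: bop_apply.rep_eq Abs_bop_inverse bounded_linear_Blinfun_apply)

lemma bop_eqI_commute:
  fixes S T :: "'a::real_normed_vector bop"
  assumes "\<And>x. bop_apply S (bop_apply T x) = bop_apply T (bop_apply S x)"
  shows "S * T = T * S"
  by (rule bop_eqI) (simp add: assms)

lemma bop_apply_suminf:
  fixes X :: "nat \<Rightarrow> 'a::banach bop"
  assumes "summable X"
  shows "bop_apply (suminf X) x = (\<Sum>n. bop_apply (X n) x)"
  using bounded_linear.suminf[OF bop_apply_left_bounded_linear assms] .

definition selfadj :: "'a::complex_inner bop \<Rightarrow> bool" where
  "selfadj S \<longleftrightarrow> (\<forall>x y. cinner (bop_apply S x) y = cinner x (bop_apply S y))"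

lemma selfadj_scaleR: "selfadj S \<Longrightarrow> selfadj (r *\<^sub>R S)"
  by (simp add: selfadj_def cinner_scaleR_left cinner_scaleR_right)

lemma selfadj_power:
  assumes "selfadj Y"
  shows "selfadj (Y ^ n)"
proof (induction n)
  case (Suc n)
  have "cinner (bop_apply (Y * Y ^ n) x) y = cinner x (bop_apply (Y ^ n * Y) y)" for x y
    using assms Suc by (simp add: selfadj_def)
  then show ?case by (simp add: selfadj_def power_commutes)
qed (simp add: selfadj_def)

instance chilbert_space \<subseteq> banach ..

section \<open>Binomial power series in a Banach algebra element\<close>

lemma norm_power_bop: "norm ((Y::'a::real_normed_vector bop) ^ n) \<le> norm Y ^ n"
proof (induction n)
  case 0 then show ?case using norm_one_bop_le by simp
next
  case (Suc n)
  have "norm (Y ^ Suc n) = norm (Y * Y ^ n)" by simp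
  also have "\<dots> \<le> norm Y * norm (Y ^ n)" by (rule norm_mult_ineq)
  also have "\<dots> \<le> norm Y * norm Y ^ n" using Suc by (simp add: mult_left_mono)
  finally show ?case by simp
qed

lemma gbinomial_abs_summable:
  fixes q :: real
  assumes "0 \<le> q" "q < 1"
  shows "summable (\<lambda>n. \<bar>a gchoose n\<bar> * q ^ n)"
proof -
  have "ereal (norm q) < conv_radius (\<lambda>n. a gchoose n)"
    using assms by (simp add: conv_radius_gchoose)
  from abs_summable_in_conv_radius[OF this] show ?thesis
    using assms by (simp add: abs_mult power_abs)
qed

text \<open>For norm Y < 1 this is (1 + Y) powr a.\<close>

definition binomial_series :: "'a::real_normed_vector bop \<Rightarrow> real \<Rightarrow> 'a bop" where
  "binomial_series Y a = (\<Sum>n. (a gchoose n) *\<^sub>R Y ^ n)"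

lemma binomial_series_abs_summable:
  fixes Y :: "'a::real_normed_vector bop"
  assumes "norm Y < 1"
  shows "summable (\<lambda>n. norm ((a gchoose n) *\<^sub>R Y ^ n))"
proof (rule summable_comparison_test[OF _ gbinomial_abs_summable[of "norm Y" a]])
  show "\<exists>N. \<forall>n\<ge>N. norm (norm ((a gchoose n) *\<^sub>R Y ^ n)) \<le> \<bar>a gchoose n\<bar> * norm Y ^ n"
    using norm_power_bop[of Y] by (auto intro!: mult_left_mono)
qed (use assms in auto)

lemma binomial_series_summable:
  fixes Y :: "'a::banach bop"
  assumes "norm Y < 1"
  shows "summable (\<lambda>n. (a gchoose n) *\<^sub>R Y ^ n)"
  using binomial_series_abs_summable[OF assms] by (rule summable_norm_cancel)

lemma binomial_series_add:
  fixes Y :: "'a::banach bop"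
  assumes "norm Y < 1"
  shows "binomial_series Y a * binomial_series Y b = binomial_series Y (a + b)"
proof -
  have "binomial_series Y a * binomial_series Y b
      = (\<Sum>k. \<Sum>i\<le>k. ((a gchoose i) *\<^sub>R Y ^ i) * ((b gchoose (k - i)) *\<^sub>R Y ^ (k - i)))"
    unfolding binomial_series_def by (intro Cauchy_product binomial_series_abs_summable assms)
  also have "\<dots> = (\<Sum>k. ((a + b) gchoose k) *\<^sub>R Y ^ k)"
  proof (rule suminf_cong)
    fix k
    have "((a gchoose i) *\<^sub>R Y ^ i) * ((b gchoose (k - i)) *\<^sub>R Y ^ (k - i))
        = ((a gchoose i) * (b gchoose (k - i))) *\<^sub>R Y ^ k" if "i \<le> k" for i
      using that by (simp flip: power_add)
    then show "(\<Sum>i\<le>k. ((a gchoose i) *\<^sub>R Y ^ i) * ((b gchoose (k - i)) *\<^sub>R Y ^ (k - i)))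
        = ((a + b) gchoose k) *\<^sub>R Y ^ k"
      by (simp add: gbinomial_Vandermonde[of a b k, symmetric] atLeast0AtMost scaleR_sum_left)
  qed
  finally show ?thesis by (simp add: binomial_series_def)
qed

lemma binomial_series_0: "binomial_series Y 0 = 1"
proof -
  have "binomial_series Y 0 = (\<Sum>n\<in>{0}. (0 gchoose n) *\<^sub>R Y ^ n)"
    unfolding binomial_series_def by (rule suminf_finite) (auto simp: gbinomial_0_left)
  then show ?thesis by simp
qed

lemma gbinomial_one_left: "((1::real) gchoose n) = (if n \<le> 1 then 1 else 0)"
proof -
  have "((1::real) gchoose n) = of_nat (1 choose n)"
    by (subst binomial_gbinomial) simp
  then show ?thesis by (cases n) (auto simp: binomial_eq_0)
qed

lemma binomial_series_1: "binomial_series Y 1 = 1 + Y"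
proof -
  have "binomial_series Y 1 = (\<Sum>n\<in>{0,1}. (1 gchoose n) *\<^sub>R Y ^ n)"
    unfolding binomial_series_def by (rule suminf_finite) (auto simp: gbinomial_one_left)
  then show ?thesis by (simp add: gbinomial_one_left)
qed

lemma binomial_series_commute:
  fixes Y W :: "'a::banach bop"
  assumes "norm Y < 1" and c: "W * Y = Y * W"
  shows "W * binomial_series Y a = binomial_series Y a * W"
proof -
  have pw: "W * Y ^ n = Y ^ n * W" for n
    using power_commuting_commutes[of Y W n] c by simp
  have s: "summable (\<lambda>n. (a gchoose n) *\<^sub>R Y ^ n)" by (rule binomial_series_summable[OF assms(1)])
  have "W * binomial_series Y a = (\<Sum>n. W * ((a gchoose n) *\<^sub>R Y ^ n))"
    unfolding binomial_series_def by (rule suminf_mult[OF s, symmetric])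
  also have "\<dots> = (\<Sum>n. ((a gchoose n) *\<^sub>R Y ^ n) * W)"
    by (simp add: pw)
  also have "\<dots> = binomial_series Y a * W"
    unfolding binomial_series_def by (rule suminf_mult2[OF s, symmetric])
  finally show ?thesis .
qed

lemma binomial_series_selfadj:
  fixes Y :: "'a::chilbert_space bop"
  assumes Y: "norm Y < 1" and "selfadj Y"
  shows "selfadj (binomial_series Y a)"
  unfolding selfadj_def
proof (intro allI)
  fix x y
  have summable: "summable (\<lambda>n. (a gchoose n) *\<^sub>R Y ^ n)" by (rule binomial_series_summable[OF Y])
  have "summable (\<lambda>n. bop_apply ((a gchoose n) *\<^sub>R Y ^ n) z)" for z
    using bounded_linear.summable[OF bop_apply_left_bounded_linear summable] .
  then have "cinner (bop_apply (binomial_series Y a) x) y = (\<Sum>n. cinner (bop_apply ((a gchoose n) *\<^sub>R Y ^ n) x) y)"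
      and "cinner x (bop_apply (binomial_series Y a) y) = (\<Sum>n. cinner x (bop_apply ((a gchoose n) *\<^sub>R Y ^ n) y))"
    unfolding binomial_series_def bop_apply_suminf[OF summable]
    by (simp_all add: bounded_linear.suminf[OF bounded_linear_cinner_left]
        bounded_linear.suminf[OF bounded_linear_cinner_right])
  moreover have "cinner (bop_apply ((a gchoose n) *\<^sub>R Y ^ n) x) y = cinner x (bop_apply ((a gchoose n) *\<^sub>R Y ^ n) y)" for n
    using selfadj_power[OF \<open>selfadj Y\<close>, of n] by (simp add: selfadj_def cinner_scaleR_left cinner_scaleR_right)
  ultimately show "cinner (bop_apply (binomial_series Y a) x) y = cinner x (bop_apply (binomial_series Y a) y)"
    by simp
qed

section \<open>Inverse square roots of positive operators\<close>

lemma norm_scaleR_minus_one_lt_one: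
  fixes P :: "'a::complex_inner bop"
  assumes c: "0 < c" and below: "\<And>x. c * (norm x)\<^sup>2 \<le> Re (cinner (bop_apply P x) x)"
  obtains t where "0 < t" "norm (t *\<^sub>R P - 1) < 1"
proof -
  define K where "K = norm P"
  define t where "t = c / (K\<^sup>2 + c)"
  have t: "0 < t" using c by (simp add: t_def add_nonneg_pos)
  have "0 < K\<^sup>2 + c" using c by (simp add: add_nonneg_pos)
  then have "K\<^sup>2 / (K\<^sup>2 + c) \<le> 1" using c by (simp add: divide_le_eq_1)
  have tK: "t * K\<^sup>2 \<le> c"
  proof -
    have "t * K\<^sup>2 = c * (K\<^sup>2 / (K\<^sup>2 + c))" by (simp add: t_def)
    also have "\<dots> \<le> c * 1" using \<open>K\<^sup>2 / (K\<^sup>2 + c) \<le> 1\<close> c by (intro mult_left_mono) simp_all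
    finally show ?thesis by simp
  qed
  define q where "q = sqrt (max 0 (1 - t * c))"
  have "norm (bop_apply (t *\<^sub>R P - 1) x) \<le> q * norm x" for x
  proof -
    have "(norm (bop_apply P x))\<^sup>2 \<le> (K * norm x)\<^sup>2"
      using norm_bop_apply[of P x] by (simp add: K_def power_mono)
    then have "t\<^sup>2 * (norm (bop_apply P x))\<^sup>2 \<le> t\<^sup>2 * (K * norm x)\<^sup>2"
      by (simp add: mult_left_mono)
    then have Px: "t\<^sup>2 * (norm (bop_apply P x))\<^sup>2 \<le> t * (t * K\<^sup>2) * (norm x)\<^sup>2"
      by (simp add: power_mult_distrib power2_eq_square mult_ac)
    have "(norm (bop_apply (t *\<^sub>R P - 1) x))\<^sup>2
        = t\<^sup>2 * (norm (bop_apply P x))\<^sup>2 + (norm x)\<^sup>2 - 2 * t * Re (cinner (bop_apply P x) x)"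
      using norm_diff_sq[of "t *\<^sub>R bop_apply P x" x] t
      by (simp add: cinner_scaleR_left power_mult_distrib)
    also have "\<dots> \<le> t * c * (norm x)\<^sup>2 + (norm x)\<^sup>2 - 2 * t * (c * (norm x)\<^sup>2)"
    proof -
      have "t * (t * K\<^sup>2) * (norm x)\<^sup>2 \<le> t * c * (norm x)\<^sup>2"
        using t tK by (intro mult_right_mono mult_left_mono) simp_all
      moreover have "2 * t * (c * (norm x)\<^sup>2) \<le> 2 * t * Re (cinner (bop_apply P x) x)"
        using t below by (intro mult_left_mono) simp_all
      ultimately show ?thesis using Px by linarith
    qed
    also have "\<dots> = (1 - t * c) * (norm x)\<^sup>2" by (simp add: algebra_simps)
    also have "\<dots> \<le> (q * norm x)\<^sup>2"
      by (simp add: q_def power_mult_distrib mult_right_mono)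
    finally show ?thesis by (rule power2_le_imp_le) (simp add: q_def)
  qed
  then have "norm (t *\<^sub>R P - 1) \<le> q" by (intro norm_bop_bound) (simp_all add: q_def)
  also have "q < 1" using t c by (simp add: q_def)
  finally show ?thesis using t that by blast
qed

lemma selfadj_inverse_sqrt_exists:
  fixes P :: "'a::chilbert_space bop"
  assumes P: "selfadj P" and "0 < c" and "\<And>x. c * (norm x)\<^sup>2 \<le> Re (cinner (bop_apply P x) x)"
  obtains S where "selfadj S" "S * P * S = 1" "P * (S * S) = 1"
    "\<And>W. W * P = P * W \<Longrightarrow> W * S = S * W"
proof -
  obtain t where t: "0 < t" and "norm (t *\<^sub>R P - 1) < 1"
    using norm_scaleR_minus_one_lt_one assms(2,3) by blast
  define Y where "Y = t *\<^sub>R P - 1"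
  have Y: "norm Y < 1" using \<open>norm (t *\<^sub>R P - 1) < 1\<close> by (simp add: Y_def)
  have tP: "t *\<^sub>R P = binomial_series Y 1" by (simp add: binomial_series_1 Y_def)
  define S where "S = sqrt t *\<^sub>R binomial_series Y (-1/2)"
  have "selfadj Y"
    using P by (simp add: Y_def selfadj_def cinner_diff_left cinner_diff_right cinner_scaleR_left cinner_scaleR_right)
  then have "selfadj S" by (simp add: S_def selfadj_scaleR binomial_series_selfadj Y)
  moreover have "S * P * S = 1"
  proof -
    have "S * P * S = binomial_series Y (-1/2) * (t *\<^sub>R P) * binomial_series Y (-1/2)"
      using t by (simp add: S_def)
    then show ?thesis by (simp add: tP binomial_series_add[OF Y] binomial_series_0)
  qed
  moreover have "P * (S * S) = 1"
  proof -
    have "P * (S * S) = (t *\<^sub>R P) * binomial_series Y (-1/2) * binomial_series Y (-1/2)"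
      using t by (simp add: S_def mult.assoc)
    then show ?thesis by (simp add: tP binomial_series_add[OF Y] binomial_series_0)
  qed
  moreover have "W * S = S * W" if "W * P = P * W" for W
  proof -
    have "W * Y = Y * W" using that by (simp add: Y_def algebra_simps)
    then show ?thesis by (simp add: S_def binomial_series_commute[OF Y])
  qed
  ultimately show ?thesis by (rule that)
qed

section \<open>Von Neumann algebras\<close>

lemma von_neumann_algebra_bounded_clinear:
  "von_neumann_algebra M \<Longrightarrow> T \<in> M \<Longrightarrow> bounded_clinear T"
  unfolding von_neumann_algebra_def by (metis (no_types, lifting) commutant_def mem_Collect_eq)

lemma von_neumann_algebra_memI:
  fixes V :: "'a::complex_inner bop"
  assumes vna: "von_neumann_algebra M"
    and comm: "\<And>s x. s \<in> commutant M \<Longrightarrow> bop_apply V (s x) = s (bop_apply V x)"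
  shows "bop_apply V \<in> M"
proof -
  have "(\<lambda>x. \<i> *\<^sub>C x) \<in> commutant M"
    using von_neumann_algebra_bounded_clinear[OF vna]
    by (auto simp: commutant_def bounded_clinear_scaleC_right bounded_clinear_scaleC)
  then have "bounded_clinear (bop_apply V)"
    using comm by (intro bounded_clinearI_ii bop_apply_bounded_linear) blast
  then have "bop_apply V \<in> commutant (commutant M)"
    using comm by (auto simp: commutant_def)
  then show ?thesis using vna by (simp add: von_neumann_algebra_def)
qed

lemma von_neumann_algebra_inverse_sqrt:
  fixes A :: "'a::chilbert_space \<Rightarrow> 'a"
  assumes vna: "von_neumann_algebra M" and A: "A \<in> M"
    and "0 < c" and below: "\<And>x. c * (norm x)\<^sup>2 \<le> (norm (cadjoint A x))\<^sup>2"
  obtains S where "selfadj S"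
    "\<And>x. bop_apply S (A (cadjoint A (bop_apply S x))) = x"
    "\<And>x. A (cadjoint A (bop_apply S (bop_apply S x))) = x"
    "\<And>s x. s \<in> commutant M \<Longrightarrow> bop_apply S (s x) = s (bop_apply S x)"
proof -
  define Ad where "Ad = cadjoint A"
  have Ad: "Ad \<in> M" using vna A by (simp add: von_neumann_algebra_def Ad_def)
  have A_bl: "bounded_clinear A" "bounded_linear A" and Ad_bl: "bounded_linear Ad"
    using von_neumann_algebra_bounded_clinear[OF vna] A Ad bounded_clinear_bounded_linear by blast+
  define P where "P = Bop A * Bop Ad"
  have P_apply: "bop_apply P x = A (Ad x)" for x by (simp add: P_def bop_apply_Bop A_bl Ad_bl)
  have "selfadj P"
    by (simp add: selfadj_def P_apply cinner_cadjoint[OF A_bl(1)] cinner_cadjoint_left[OF A_bl(1)] Ad_def)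
  moreover have "c * (norm x)\<^sup>2 \<le> Re (cinner (bop_apply P x) x)" for x
    using below[of x] by (simp add: P_apply cinner_cadjoint[OF A_bl(1)] Re_cinner_self Ad_def)
  ultimately obtain S where S: "selfadj S" "S * P * S = 1" "P * (S * S) = 1"
    and S_comm: "\<And>W. W * P = P * W \<Longrightarrow> W * S = S * W"
    using selfadj_inverse_sqrt_exists \<open>0 < c\<close> by metis
  have "bop_apply S (s x) = s (bop_apply S x)" if s: "s \<in> commutant M" for s x
  proof -
    have s_bl: "bounded_linear s" using s by (simp add: commutant_def bounded_clinear_bounded_linear)
    have "s (A y) = A (s y)" "s (Ad y) = Ad (s y)" for y
      using s A Ad by (auto simp: commutant_def fun_eq_iff)
    then have "Bop s * P = P * Bop s"
      by (intro bop_eqI_commute) (simp add: P_apply bop_apply_Bop s_bl)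
    then have "bop_apply (Bop s * S) x = bop_apply (S * Bop s) x" by (simp add: S_comm)
    then show ?thesis by (simp add: bop_apply_Bop s_bl)
  qed
  moreover have "bop_apply S (A (Ad (bop_apply S x))) = x" for x
    using arg_cong[OF S(2), of "\<lambda>T. bop_apply T x"] by (simp add: P_apply)
  moreover have "A (Ad (bop_apply S (bop_apply S x))) = x" for x
    using arg_cong[OF S(3), of "\<lambda>T. bop_apply T x"] by (simp add: P_apply)
  ultimately show ?thesis using that \<open>selfadj S\<close> by (simp add: Ad_def)
qed

lemma finite_von_neumann_algebra_invertible:
  fixes A :: "'a::chilbert_space \<Rightarrow> 'a"
  assumes fin: "finite_von_neumann_algebra M" and A: "A \<in> M"
    and "0 < c" and "\<And>x. c * (norm x)\<^sup>2 \<le> (norm (cadjoint A x))\<^sup>2"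
  shows "invertible_op A \<and> surj (cadjoint A)"
proof -
  have vna: "von_neumann_algebra M" using fin by (simp add: finite_von_neumann_algebra_def)
  obtain S where "selfadj S" and SPS: "\<And>x. bop_apply S (A (cadjoint A (bop_apply S x))) = x"
    and PSS: "\<And>x. A (cadjoint A (bop_apply S (bop_apply S x))) = x"
    and S_comm: "\<And>s x. s \<in> commutant M \<Longrightarrow> bop_apply S (s x) = s (bop_apply S x)"
    using von_neumann_algebra_inverse_sqrt[OF vna A assms(3,4)] by metis
  define Ad where "Ad = cadjoint A"
  have Ad: "Ad \<in> M" using vna A by (simp add: von_neumann_algebra_def Ad_def)
  have A_bl: "bounded_clinear A" "bounded_linear A" and Ad_bl: "bounded_linear Ad"
    using von_neumann_algebra_bounded_clinear[OF vna] A Ad bounded_clinear_bounded_linear by blast+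
  have comm: "s (Ad x) = Ad (s x)" if "s \<in> commutant M" for s x
    using that Ad by (auto simp: commutant_def fun_eq_iff)
  define V where "V = Bop Ad * S"
  have V_apply: "bop_apply V x = Ad (bop_apply S x)" for x by (simp add: V_def bop_apply_Bop Ad_bl)
  have V: "bop_apply V \<in> M"
    by (rule von_neumann_algebra_memI[OF vna]) (simp add: V_apply S_comm comm)
  have V_adjoint: "cadjoint (bop_apply V) = bop_apply (S * Bop A)"
  proof (rule cadjoint_eqI)
    show "bounded_clinear (bop_apply V)" using V by (rule von_neumann_algebra_bounded_clinear[OF vna])
    show "cinner (bop_apply V x) y = cinner x (bop_apply (S * Bop A) y)" for x y
      using \<open>selfadj S\<close>
      by (simp add: V_apply Ad_def cinner_cadjoint_left[OF A_bl(1)] bop_apply_Bop A_bl selfadj_def)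
  qed
  have "cadjoint (bop_apply V) \<circ> bop_apply V = id"
    by (simp add: V_adjoint V_apply bop_apply_Bop A_bl SPS[unfolded Ad_def[symmetric]] fun_eq_iff)
  then have "bop_apply V \<circ> cadjoint (bop_apply V) = id"
    using fin V unfolding finite_von_neumann_algebra_def by blast
  then have AdSSA: "Ad (bop_apply S (bop_apply S (A x))) = x" for x
    by (simp add: V_adjoint V_apply bop_apply_Bop A_bl fun_eq_iff)
  define B where "B = Bop Ad * (S * S)"
  have B_apply: "bop_apply B x = Ad (bop_apply S (bop_apply S x))" for x
    by (simp add: B_def bop_apply_Bop Ad_bl)
  have "bop_apply B \<in> M"
    by (rule von_neumann_algebra_memI[OF vna]) (simp add: B_apply S_comm comm)
  then have "bounded_clinear (bop_apply B)" by (rule von_neumann_algebra_bounded_clinear[OF vna])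
  moreover have "A \<circ> bop_apply B = id" by (simp add: B_apply PSS[unfolded Ad_def[symmetric]] fun_eq_iff)
  moreover have "bop_apply B \<circ> A = id" by (simp add: B_apply AdSSA fun_eq_iff)
  ultimately have "invertible_op A" unfolding invertible_op_def by blast
  moreover have "surj Ad" by (rule surjI, rule AdSSA)
  ultimately show ?thesis by (simp add: Ad_def)
qed

section \<open>Frames\<close>

lemma infsum_Times_finite:
  fixes f :: "'j \<times> 'i \<Rightarrow> real"
  assumes fin: "finite I" and nonneg: "\<And>x. f x \<ge> 0"
    and summable: "\<And>i. i \<in> I \<Longrightarrow> (\<lambda>j. f (j, i)) summable_on J"
  shows "f summable_on (J \<times> I) \<and> infsum f (J \<times> I) = (\<Sum>i\<in>I. infsum (\<lambda>j. f (j, i)) J)"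
proof -
  have partial: "(\<lambda>j. \<Sum>i\<in>I'. f (j, i)) summable_on J \<and>
      infsum (\<lambda>j. \<Sum>i\<in>I'. f (j, i)) J = (\<Sum>i\<in>I'. infsum (\<lambda>j. f (j, i)) J)" if "I' \<subseteq> I" for I'
    using finite_subset[OF that fin] that
  proof (induction I' rule: finite_induct)
    case (insert i I')
    then show ?case using summable by (simp add: summable_on_add infsum_add)
  qed auto
  have Sigma: "f summable_on (J \<times> I)"
  proof (rule summable_on_SigmaI[where g="\<lambda>j. \<Sum>i\<in>I. f (j, i)"])
    show "((\<lambda>i. f (j, i)) has_sum (\<Sum>i\<in>I. f (j, i))) I" for j
      using fin by (rule has_sum_finiteI) simp
  qed (use partial[of I] nonneg in auto)
  have "infsum f (J \<times> I) = infsum (\<lambda>j. \<Sum>i\<in>I. f (j, i)) J"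
    using infsum_Sigma_banach[OF Sigma] fin by simp
  with Sigma partial[of I] show ?thesis by simp
qed

lemma bessel_seq_Times_finite:
  fixes f :: "'j \<times> 'i \<Rightarrow> 'a::complex_inner"
  assumes fin: "finite I" and bessel: "\<And>i. i \<in> I \<Longrightarrow> bessel_seq J (\<lambda>j. f (j, i))"
  shows "bessel_seq (J \<times> I) f"
proof -
  obtain b where b: "\<And>i x. i \<in> I \<Longrightarrow> (\<lambda>j. (cmod (cinner x (f (j, i))))\<^sup>2) summable_on J \<and>
      (\<Sum>\<^sub>\<infinity>j\<in>J. (cmod (cinner x (f (j, i))))\<^sup>2) \<le> b i * (norm x)\<^sup>2"
    using bessel unfolding bessel_seq_def by metis
  have "(\<lambda>p. (cmod (cinner x (f p)))\<^sup>2) summable_on J \<times> I \<and>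
      (\<Sum>\<^sub>\<infinity>p\<in>J \<times> I. (cmod (cinner x (f p)))\<^sup>2) \<le> (\<Sum>i\<in>I. b i) * (norm x)\<^sup>2" for x
  proof -
    have "(\<lambda>p. (cmod (cinner x (f p)))\<^sup>2) summable_on J \<times> I \<and>
        (\<Sum>\<^sub>\<infinity>p\<in>J \<times> I. (cmod (cinner x (f p)))\<^sup>2) = (\<Sum>i\<in>I. \<Sum>\<^sub>\<infinity>j\<in>J. (cmod (cinner x (f (j, i))))\<^sup>2)"
      using infsum_Times_finite[OF fin, of "\<lambda>p. (cmod (cinner x (f p)))\<^sup>2"] b by simp
    moreover have "(\<Sum>i\<in>I. \<Sum>\<^sub>\<infinity>j\<in>J. (cmod (cinner x (f (j, i))))\<^sup>2) \<le> (\<Sum>i\<in>I. b i * (norm x)\<^sup>2)"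
      using b by (intro sum_mono) blast
    ultimately show ?thesis by (simp add: sum_distrib_right)
  qed
  then show ?thesis unfolding bessel_seq_def by blast
qed

lemma frame_sum_cadjoint:
  fixes T :: "'a::chilbert_space \<Rightarrow> 'a"
  assumes "bounded_clinear T" and "\<And>j. j \<in> J \<Longrightarrow> g j = T (f j)"
  shows "(\<Sum>\<^sub>\<infinity>j\<in>J. (cmod (cinner x (g j)))\<^sup>2)
    = (\<Sum>\<^sub>\<infinity>j\<in>J. (cmod (cinner (cadjoint T x) (f j)))\<^sup>2)"
  by (rule infsum_cong) (simp add: assms cinner_cadjoint_left)

lemma bessel_seq_bound:
  fixes f :: "'j \<Rightarrow> 'a::complex_inner"
  assumes "bessel_seq J f"
  obtains b where "0 < b" "\<And>x. (\<lambda>j. (cmod (cinner x (f j)))\<^sup>2) summable_on J"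
    "\<And>x. (\<Sum>\<^sub>\<infinity>j\<in>J. (cmod (cinner x (f j)))\<^sup>2) \<le> b * (norm x)\<^sup>2"
proof -
  obtain b where b: "\<And>x. (\<lambda>j. (cmod (cinner x (f j)))\<^sup>2) summable_on J \<and>
      (\<Sum>\<^sub>\<infinity>j\<in>J. (cmod (cinner x (f j)))\<^sup>2) \<le> b * (norm x)\<^sup>2"
    using assms unfolding bessel_seq_def by blast
  show ?thesis
  proof (rule that[of "max b 1"])
    show "(\<lambda>j. (cmod (cinner x (f j)))\<^sup>2) summable_on J" for x using b by blast
    show "(\<Sum>\<^sub>\<infinity>j\<in>J. (cmod (cinner x (f j)))\<^sup>2) \<le> max b 1 * (norm x)\<^sup>2" for x
      using b[of x] mult_right_mono[of b "max b 1" "(norm x)\<^sup>2"] by simp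
  qed simp
qed

lemma frame_cadjoint_bounded_below:
  fixes T :: "'a::chilbert_space \<Rightarrow> 'a"
  assumes T: "bounded_clinear T" and g: "\<And>j. j \<in> J \<Longrightarrow> g j = T (f j)"
    and "frame J g" and "bessel_seq J f"
  obtains c where "0 < c" "\<And>x. c * (norm x)\<^sup>2 \<le> (norm (cadjoint T x))\<^sup>2"
proof -
  obtain a where a: "0 < a" and lower: "\<And>x. a * (norm x)\<^sup>2 \<le> (\<Sum>\<^sub>\<infinity>j\<in>J. (cmod (cinner x (g j)))\<^sup>2)"
    using \<open>frame J g\<close> unfolding frame_def by blast
  obtain b where b: "0 < b" and upper: "\<And>x. (\<Sum>\<^sub>\<infinity>j\<in>J. (cmod (cinner x (f j)))\<^sup>2) \<le> b * (norm x)\<^sup>2"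
    using bessel_seq_bound[OF \<open>bessel_seq J f\<close>] by metis
  have "a / b * (norm x)\<^sup>2 \<le> (norm (cadjoint T x))\<^sup>2" for x
    using lower[of x] upper[of "cadjoint T x"] b
    by (simp add: frame_sum_cadjoint[OF T g] field_simps)
  with a b show ?thesis using that[of "a / b"] by simp
qed

lemma frame_if_cadjoint_surj:
  fixes T :: "'a::chilbert_space \<Rightarrow> 'a"
  assumes T: "bounded_clinear T" and g: "\<And>j. j \<in> J \<Longrightarrow> g j = T (f j)"
    and "frame J g" and "bessel_seq J f" and "surj (cadjoint T)"
  shows "frame J f"
proof -
  obtain a where a: "0 < a" and lower: "\<And>x. a * (norm x)\<^sup>2 \<le> (\<Sum>\<^sub>\<infinity>j\<in>J. (cmod (cinner x (g j)))\<^sup>2)"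
    using \<open>frame J g\<close> unfolding frame_def by blast
  obtain b where b: "0 < b" and summable: "\<And>x. (\<lambda>j. (cmod (cinner x (f j)))\<^sup>2) summable_on J"
    and upper: "\<And>x. (\<Sum>\<^sub>\<infinity>j\<in>J. (cmod (cinner x (f j)))\<^sup>2) \<le> b * (norm x)\<^sup>2"
    using bessel_seq_bound[OF \<open>bessel_seq J f\<close>] by metis
  obtain K where "\<And>x. norm (T x) \<le> norm x * K" using T unfolding bounded_clinear_def by blast
  then have "norm (T x) \<le> norm x * max K 1" for x
    by (metis max.cobounded1 mult_left_mono norm_ge_zero order_trans)
  moreover have "0 \<le> max K 1" by simp
  ultimately have K: "norm (cadjoint T y) \<le> norm y * max K 1" for y
    using norm_cadjoint_le[OF T] by blast
  have "a / (max K 1)\<^sup>2 * (norm x)\<^sup>2 \<le> (\<Sum>\<^sub>\<infinity>j\<in>J. (cmod (cinner x (f j)))\<^sup>2)" for x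
  proof -
    obtain y where x: "x = cadjoint T y" using \<open>surj (cadjoint T)\<close> by (metis surjD)
    have "(norm x)\<^sup>2 \<le> (max K 1)\<^sup>2 * (norm y)\<^sup>2"
      using K[of y] by (simp add: x power_mono flip: power_mult_distrib mult.commute)
    then have "a / (max K 1)\<^sup>2 * (norm x)\<^sup>2 \<le> a * (norm y)\<^sup>2"
      using a by (simp add: field_simps mult_left_mono)
    also have "\<dots> \<le> (\<Sum>\<^sub>\<infinity>j\<in>J. (cmod (cinner x (f j)))\<^sup>2)"
      using lower[of y] by (simp add: x frame_sum_cadjoint[OF T g])
    finally show ?thesis .
  qed
  with a b summable upper show ?thesis
    unfolding frame_def by (intro exI[of _ "a / (max K 1)\<^sup>2"] exI[of _ b]) simp
qed

theorem lemma3p1: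
  fixes G :: "'g monoid"
    and \<pi> :: "'g \<Rightarrow> 'h::chilbert_space \<Rightarrow> 'h"
    and \<mu> :: "'g \<Rightarrow> 'g \<Rightarrow> complex"
    and k :: nat
    and \<xi> \<eta> :: "nat \<Rightarrow> 'h"
    and A :: "'h \<Rightarrow> 'h"
  assumes "group G"
    and "countable (carrier G)"
    and "proj_unitary_rep G \<pi> \<mu>"
    and "finite_von_neumann_algebra (commutant (\<pi> ` carrier G))"
    and "frame (carrier G \<times> {1..k}) (\<lambda>(g, i). \<pi> g (\<xi> i))"
    and "A \<in> commutant (\<pi> ` carrier G)"
    and "\<forall>i\<in>{1..k}. bessel_vector G \<pi> (\<eta> i)"
    and "\<forall>i\<in>{1..k}. \<xi> i = A (\<eta> i)"
  shows "invertible_op A \<and> frame (carrier G \<times> {1..k}) (\<lambda>(g, i). \<pi> g (\<eta> i))"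
proof -
  \<comment> \<open>Only the commutation A \<pi>(g) = \<pi>(g) A is used, not the group structure, countability or unitarity.\<close>
  have A: "bounded_clinear A" using assms(6) by (simp add: commutant_def)
  have \<xi>: "(\<lambda>(g, i). \<pi> g (\<xi> i)) j = A ((\<lambda>(g, i). \<pi> g (\<eta> i)) j)" if "j \<in> carrier G \<times> {1..k}" for j
    using that assms(6,8) by (auto simp: commutant_def fun_eq_iff)
  have \<eta>: "bessel_seq (carrier G \<times> {1..k}) (\<lambda>(g, i). \<pi> g (\<eta> i))"
    using assms(7) by (intro bessel_seq_Times_finite) (simp_all add: bessel_vector_def)
  obtain c where "0 < c" "\<And>x. c * (norm x)\<^sup>2 \<le> (norm (cadjoint A x))\<^sup>2"
    using frame_cadjoint_bounded_below[OF A \<xi> assms(5) \<eta>] by blast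
  then have "invertible_op A \<and> surj (cadjoint A)"
    using finite_von_neumann_algebra_invertible[OF assms(4,6)] by blast
  with frame_if_cadjoint_surj[OF A \<xi> assms(5) \<eta>] show ?thesis by blast
qed

end
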